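(* Let $(X,\delta_X)$ be a multi-retraceable represented space. Then there is a total representation $\delta:2^\mathbb{N}\to X$ (i.e. a surjective map defined on all of Cantor space $2^\mathbb{N}\subseteq\mathbb{N}^\mathbb{N}$) such that $\delta\equiv\delta_X$. In particular, $X$ is compact with respect to the final topology of $\delta_X$.
   Context: A represented space $(X,\delta_X)$ is a set $X$ with a surjective partial map $\delta_X:\subseteq\mathbb{N}^\mathbb{N}\to X$; it carries the final topology induced by $\delta_X$. For representations $\delta_1,\delta_2$ of the same set, $\delta_1\le\delta_2$ means $\delta_1=\delta_2F$ for some computable partial $F:\subseteq\mathbb{N}^\mathbb{N}\to\mathbb{N}^\mathbb{N}$, and $\equiv$ is the induced equivalence. For $p\in\mathbb{N}^\mathbb{N}$, $p-1$ is the concatenation of $p(0)-1,p(1)-1,\dots$ with $0-1$ read as the empty word. The completion $\overline X=X\cup\{\bot\}$ has the total representation $\delta_{\overline X}(p)=\delta_X(p-1)$ if $p-1$ is an infinite sequence in $\mathrm{dom}(\delta_X)$ and $\delta_{\overline X}(p)=\bot$ otherwise. $X$ is multi-retraceable if there is a computable multi-valued map $r:\overline X\rightrightarrows X$ with $r(x)=\{x\}$ for $x\in X$ (computable meaning it has a computable realizer $F$ with $\delta_X F(p)\in r(\delta_{\overline X}(p))$ for all $p$). *)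

theory Defs
  imports "HOL-Analysis.Analysis" "HOL-Library.Nat_Bijection"
begin

type_synonym baire = "nat \<Rightarrow> nat"

inductive rec_fn :: "nat \<Rightarrow> (nat list \<Rightarrow> nat) \<Rightarrow> bool" where
  rf_zero: "rec_fn n (\<lambda>_. 0)"
| rf_succ: "rec_fn 1 (\<lambda>xs. Suc (hd xs))"
| rf_proj: "i < n \<Longrightarrow> rec_fn n (\<lambda>xs. xs ! i)"
| rf_comp: "rec_fn m g \<Longrightarrow> length fs = m \<Longrightarrow> (\<forall>f\<in>set fs. rec_fn n f)
             \<Longrightarrow> rec_fn n (\<lambda>xs. g (map (\<lambda>f. f xs) fs))"
| rf_prim: "rec_fn n g \<Longrightarrow> rec_fn (Suc (Suc n)) h
             \<Longrightarrow> rec_fn (Suc n) (\<lambda>xs. rec_nat (g (tl xs)) (\<lambda>k r. h (k # r # tl xs)) (hd xs))"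
| rf_mu: "rec_fn (Suc n) g \<Longrightarrow> (\<forall>xs. length xs = n \<longrightarrow> (\<exists>y. g (y # xs) = 0))
             \<Longrightarrow> rec_fn n (\<lambda>xs. LEAST y. g (y # xs) = 0)"

definition prefix_code :: "baire \<Rightarrow> nat \<Rightarrow> nat" where
  "prefix_code p n = list_encode (map p [0..<n])"

text \<open>F :\<subseteq> Baire \<rightarrow> Baire with domain D is computable: there is a total recursive g which,
  given a code of a finite prefix of the input and an output index i, either answers 0
  (no answer yet) or F(p)(i)+1, and every output value is eventually produced.\<close>
definition computable_on :: "baire set \<Rightarrow> (baire \<Rightarrow> baire) \<Rightarrow> bool" where
  "computable_on D F \<longleftrightarrow> (\<exists>g. rec_fn 2 g \<and>
     (\<forall>p\<in>D. \<forall>i. (\<forall>n. g [prefix_code p n, i] \<in> {0, Suc (F p i)}) \<and>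
                  (\<exists>n. g [prefix_code p n, i] = Suc (F p i))))"

definition representation :: "baire set \<Rightarrow> (baire \<Rightarrow> 'a) \<Rightarrow> 'a set \<Rightarrow> bool" where
  "representation D \<delta> X \<longleftrightarrow> \<delta> ` D = X"

definition rep_le :: "baire set \<Rightarrow> (baire \<Rightarrow> 'a) \<Rightarrow> baire set \<Rightarrow> (baire \<Rightarrow> 'a) \<Rightarrow> bool" where
  "rep_le D1 \<delta>1 D2 \<delta>2 \<longleftrightarrow> (\<exists>F. computable_on D1 F \<and> (\<forall>p\<in>D1. F p \<in> D2 \<and> \<delta>1 p = \<delta>2 (F p)))"

definition rep_equiv :: "baire set \<Rightarrow> (baire \<Rightarrow> 'a) \<Rightarrow> baire set \<Rightarrow> (baire \<Rightarrow> 'a) \<Rightarrow> bool" where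
  "rep_equiv D1 \<delta>1 D2 \<delta>2 \<longleftrightarrow> rep_le D1 \<delta>1 D2 \<delta>2 \<and> rep_le D2 \<delta>2 D1 \<delta>1"

definition cantor_space :: "baire set" where
  "cantor_space = {p. \<forall>n. p n \<le> 1}"

definition minus_one :: "baire \<Rightarrow> baire option" where
  "minus_one p = (if infinite {n. p n \<noteq> 0}
     then Some (\<lambda>k. p (Infinite_Set.enumerate {n. p n \<noteq> 0} k) - 1) else None)"

text \<open>Completion: X-bar = X \<union> {\<bottom>}, modelled by 'a option with None = \<bottom>; total representation.\<close>
definition completion_rep :: "baire set \<Rightarrow> (baire \<Rightarrow> 'a) \<Rightarrow> baire \<Rightarrow> 'a option" where
  "completion_rep D \<delta> p = (case minus_one p of Some q \<Rightarrow> if q \<in> D then Some (\<delta> q) else None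
                                             | None \<Rightarrow> None)"

definition multi_retraceable :: "baire set \<Rightarrow> (baire \<Rightarrow> 'a) \<Rightarrow> 'a set \<Rightarrow> bool" where
  "multi_retraceable D \<delta> X \<longleftrightarrow> (\<exists>r :: 'a option \<Rightarrow> 'a set.
      (\<forall>x\<in>X. r (Some x) = {x}) \<and> (\<forall>y \<in> Some ` X \<union> {None}. r y \<subseteq> X) \<and>
      (\<exists>F. computable_on UNIV F \<and>
           (\<forall>p. F p \<in> D \<and> \<delta> (F p) \<in> r (completion_rep D \<delta> p))))"

definition final_open :: "baire set \<Rightarrow> (baire \<Rightarrow> 'a) \<Rightarrow> 'a set \<Rightarrow> 'a set \<Rightarrow> bool" where
  "final_open D \<delta> X U \<longleftrightarrow> U \<subseteq> X \<and> openin (top_of_set D) {p\<in>D. \<delta> p \<in> U}"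

lemma istopology_final_open:
  assumes "\<delta> ` D \<subseteq> X"
  shows "istopology (final_open D \<delta> X)"
  unfolding istopology_def final_open_def
proof (intro conjI allI impI ballI)
  fix S T assume a: "S \<subseteq> X \<and> openin (top_of_set D) {p \<in> D. \<delta> p \<in> S}"
    "T \<subseteq> X \<and> openin (top_of_set D) {p \<in> D. \<delta> p \<in> T}"
  show "S \<inter> T \<subseteq> X" using a by auto
  have "{p \<in> D. \<delta> p \<in> S \<inter> T} = {p \<in> D. \<delta> p \<in> S} \<inter> {p \<in> D. \<delta> p \<in> T}" by auto
  then show "openin (top_of_set D) {p \<in> D. \<delta> p \<in> S \<inter> T}" using a by auto
next
  fix K assume a: "\<forall>S\<in>K. S \<subseteq> X \<and> openin (top_of_set D) {p \<in> D. \<delta> p \<in> S}"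
  show "\<Union> K \<subseteq> X" using a by auto
  have "{p \<in> D. \<delta> p \<in> \<Union> K} = (\<Union>S\<in>K. {p \<in> D. \<delta> p \<in> S})" by auto
  then show "openin (top_of_set D) {p \<in> D. \<delta> p \<in> \<Union> K}" using a by auto
qed

definition final_topology :: "baire set \<Rightarrow> (baire \<Rightarrow> 'a) \<Rightarrow> 'a set \<Rightarrow> 'a topology" where
  "final_topology D \<delta> X = topology (final_open D \<delta> X)"

end

theory Submission
  imports Defs
begin

text \<open>Encode a name \<open>p\<close> as the binary sequence \<open>1\<^bsup>p 0\<^esup> 0 1\<^bsup>p 1\<^esup> 0 \<dots>\<close>, and
  decode an arbitrary binary sequence by replacing each \<open>0\<close> by one plus the length of the run
  of \<open>1\<close>s before it and each \<open>1\<close> by \<open>0\<close>; decoding the encoding of \<open>p\<close> gives \<open>q\<close> with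
  \<open>q - 1 = p\<close>. Hence decoding followed by a realizer of the multi-valued retraction of the
  completion onto \<open>X\<close> is a total representation of \<open>X\<close> on Cantor space, and encoding
  translates \<open>\<delta>\<^sub>X\<close> into it. Both translations are computable; since computable maps are
  continuous, \<open>X\<close> is a continuous image of the compact Cantor space.\<close>

section \<open>Total recursive functions\<close>

text \<open>Unlike rec_fn, this notion only looks at argument lists of the right length,
  so it is closed under extensional rewriting.\<close>
definition total_recursive :: "nat \<Rightarrow> (nat list \<Rightarrow> nat) \<Rightarrow> bool" where
  "total_recursive n f \<longleftrightarrow> (\<exists>g. rec_fn n g \<and> (\<forall>xs. length xs = n \<longrightarrow> g xs = f xs))"

lemma total_recursive_cong:
  "total_recursive n f \<Longrightarrow> (\<And>xs. length xs = n \<Longrightarrow> f xs = f' xs) \<Longrightarrow> total_recursive n f'"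
  unfolding total_recursive_def by metis

lemma rec_fn_imp_total_recursive: "rec_fn n f \<Longrightarrow> total_recursive n f"
  unfolding total_recursive_def by blast

lemma total_recursive_2E:
  assumes "total_recursive 2 f"
  obtains g where "rec_fn 2 g" "\<And>a b. g [a, b] = f [a, b]"
  using assms unfolding total_recursive_def by (metis length_Cons list.size(3) numeral_2_eq_2)

lemma total_recursive_proj: "i < n \<Longrightarrow> total_recursive n (\<lambda>xs. xs ! i)"
  by (rule rec_fn_imp_total_recursive) (rule rf_proj)

lemma total_recursive_comp:
  assumes g: "total_recursive m g" and len: "length fs = m"
    and fs: "\<forall>f\<in>set fs. total_recursive n f"
  shows "total_recursive n (\<lambda>xs. g (map (\<lambda>f. f xs) fs))"
proof -
  from fs obtain W where W: "\<forall>f\<in>set fs. rec_fn n (W f) \<and> (\<forall>xs. length xs = n \<longrightarrow> W f xs = f xs)"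
    unfolding total_recursive_def by metis
  from g obtain g' where g': "rec_fn m g'" "\<forall>xs. length xs = m \<longrightarrow> g' xs = g xs"
    unfolding total_recursive_def by blast
  have "rec_fn n (\<lambda>xs. g' (map (\<lambda>f. f xs) (map W fs)))"
    by (rule rf_comp[OF g'(1)]) (use len W in auto)
  moreover have "g' (map (\<lambda>f. f xs) (map W fs)) = g (map (\<lambda>f. f xs) fs)" if "length xs = n" for xs
  proof -
    have "map (\<lambda>f. f xs) (map W fs) = map (\<lambda>f. f xs) fs"
      unfolding map_map by (rule map_cong) (use W that in auto)
    then show ?thesis using g'(2) len by (simp only: length_map)
  qed
  ultimately show ?thesis unfolding total_recursive_def by blast
qed

lemma total_recursive_prim_rec:
  assumes g: "total_recursive n g" and h: "total_recursive (Suc (Suc n)) h"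
  shows "total_recursive (Suc n) (\<lambda>xs. rec_nat (g (tl xs)) (\<lambda>k r. h (k # r # tl xs)) (hd xs))"
proof -
  from g obtain g' where g': "rec_fn n g'" "\<forall>xs. length xs = n \<longrightarrow> g' xs = g xs"
    unfolding total_recursive_def by blast
  from h obtain h' where h': "rec_fn (Suc (Suc n)) h'"
    "\<forall>xs. length xs = Suc (Suc n) \<longrightarrow> h' xs = h xs"
    unfolding total_recursive_def by blast
  have "rec_nat (g' (tl xs)) (\<lambda>k r. h' (k # r # tl xs)) y
      = rec_nat (g (tl xs)) (\<lambda>k r. h (k # r # tl xs)) y" if "length xs = Suc n" for xs y
    using that g'(2) h'(2) by (induct y) auto
  then show ?thesis unfolding total_recursive_def using rf_prim[OF g'(1) h'(1)] by auto
qed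

lemma total_recursive_Least:
  assumes g: "total_recursive (Suc n) g" and regular: "\<And>xs. length xs = n \<Longrightarrow> \<exists>y. g (y # xs) = 0"
  shows "total_recursive n (\<lambda>xs. LEAST y. g (y # xs) = 0)"
proof -
  from g obtain g' where g': "rec_fn (Suc n) g'" "\<forall>xs. length xs = Suc n \<longrightarrow> g' xs = g xs"
    unfolding total_recursive_def by blast
  have eq: "g' (y # xs) = g (y # xs)" if "length xs = n" for xs y using g'(2) that by simp
  have "rec_fn n (\<lambda>xs. LEAST y. g' (y # xs) = 0)"
    by (rule rf_mu[OF g'(1)]) (use regular eq in auto)
  then show ?thesis unfolding total_recursive_def using eq by auto
qed

lemma total_recursive_comp_Cons:
  assumes g: "total_recursive (Suc n) g" and f: "total_recursive n f"
  shows "total_recursive n (\<lambda>xs. g (f xs # xs))"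
proof -
  have A: "total_recursive n (\<lambda>xs. g (map (\<lambda>h. h xs) (f # map (\<lambda>i xs. xs ! i) [0..<n])))"
    by (rule total_recursive_comp[OF g]) (use f total_recursive_proj in auto)
  have B: "map (\<lambda>h. h xs) (f # map (\<lambda>i xs. xs ! i) [0..<n]) = f xs # xs"
    if "length xs = n" for xs
    using that by (simp add: comp_def) (metis map_nth)
  show ?thesis by (rule total_recursive_cong[OF A]) (simp only: B)
qed

lemma total_recursive_rec_nat:
  assumes "total_recursive n f" and "total_recursive n b" and "total_recursive (Suc (Suc n)) h"
  shows "total_recursive n (\<lambda>xs. rec_nat (b xs) (\<lambda>k r. h (k # r # xs)) (f xs))"
  using total_recursive_comp_Cons[OF total_recursive_prim_rec[OF assms(2,3)] assms(1)] by simp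

lemma total_recursive_compose1:
  "total_recursive 1 (\<lambda>xs. F (xs ! 0)) \<Longrightarrow> total_recursive n f
   \<Longrightarrow> total_recursive n (\<lambda>xs. F (f xs))"
  using total_recursive_comp[of 1 "\<lambda>xs. F (xs ! 0)" "[f]" n] by simp

lemma total_recursive_compose2:
  "total_recursive 2 (\<lambda>xs. F (xs ! 0) (xs ! 1)) \<Longrightarrow> total_recursive n f \<Longrightarrow> total_recursive n g
   \<Longrightarrow> total_recursive n (\<lambda>xs. F (f xs) (g xs))"
  using total_recursive_comp[of 2 "\<lambda>xs. F (xs ! 0) (xs ! 1)" "[f, g]" n] by simp

lemma total_recursive_compose3:
  "total_recursive 3 (\<lambda>xs. F (xs ! 0) (xs ! 1) (xs ! 2)) \<Longrightarrow> total_recursive n f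
   \<Longrightarrow> total_recursive n g \<Longrightarrow> total_recursive n h
   \<Longrightarrow> total_recursive n (\<lambda>xs. F (f xs) (g xs) (h xs))"
  using total_recursive_comp[of 3 "\<lambda>xs. F (xs ! 0) (xs ! 1) (xs ! 2)" "[f, g, h]" n]
  by (simp add: numeral_3_eq_3)

lemma total_recursive_Suc:
  assumes "total_recursive n f" shows "total_recursive n (\<lambda>xs. Suc (f xs))"
proof (rule total_recursive_compose1[OF _ assms])
  show "total_recursive 1 (\<lambda>xs. Suc (xs ! 0))"
    by (rule total_recursive_cong[OF rec_fn_imp_total_recursive[OF rf_succ]])
      (simp add: hd_conv_nth length_greater_0_conv[symmetric])
qed

lemma total_recursive_const: "total_recursive n (\<lambda>_. k)"
  by (induct k) (auto intro: total_recursive_Suc rec_fn_imp_total_recursive rf_zero)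

lemma total_recursive_add:
  assumes "total_recursive n f" "total_recursive n g"
  shows "total_recursive n (\<lambda>xs. f xs + g xs)"
proof (rule total_recursive_compose2[OF _ assms])
  have A: "total_recursive 2 (\<lambda>xs. rec_nat (xs ! 1) (\<lambda>k r. Suc ((k # r # xs) ! 1)) (xs ! 0))"
    by (rule total_recursive_rec_nat total_recursive_proj total_recursive_Suc | simp)+
  have B: "rec_nat y (\<lambda>k r. Suc r) x = x + y" for x y :: nat by (induct x) auto
  show "total_recursive 2 (\<lambda>xs. xs ! 0 + xs ! 1)" by (rule total_recursive_cong[OF A]) (simp add: B)
qed

lemma total_recursive_pred:
  assumes "total_recursive n f" shows "total_recursive n (\<lambda>xs. f xs - 1)"
proof (rule total_recursive_compose1[OF _ assms])
  have A: "total_recursive 1 (\<lambda>xs. rec_nat 0 (\<lambda>k r. (k # r # xs) ! 0) (xs ! 0))"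
    by (rule total_recursive_rec_nat total_recursive_proj total_recursive_const | simp)+
  have B: "rec_nat 0 (\<lambda>k r. k) x = x - 1" for x :: nat by (induct x) auto
  show "total_recursive 1 (\<lambda>xs. xs ! 0 - 1)" by (rule total_recursive_cong[OF A]) (simp add: B)
qed

lemma total_recursive_diff:
  assumes "total_recursive n f" "total_recursive n g"
  shows "total_recursive n (\<lambda>xs. f xs - g xs)"
proof (rule total_recursive_compose2[OF _ assms])
  have A: "total_recursive 2 (\<lambda>xs. rec_nat (xs ! 0) (\<lambda>k r. (k # r # xs) ! 1 - 1) (xs ! 1))"
    by (rule total_recursive_rec_nat total_recursive_proj total_recursive_pred | simp)+
  have B: "rec_nat x (\<lambda>k r. r - Suc 0) y = x - y" for x y :: nat by (induct y) auto
  show "total_recursive 2 (\<lambda>xs. xs ! 0 - xs ! 1)" by (rule total_recursive_cong[OF A]) (simp add: B)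
qed

lemma total_recursive_if_zero:
  assumes "total_recursive n c" "total_recursive n f" "total_recursive n g"
  shows "total_recursive n (\<lambda>xs. if c xs = 0 then f xs else g xs)"
proof (rule total_recursive_compose3[OF _ assms])
  have A: "total_recursive 3 (\<lambda>xs. rec_nat (xs ! 1) (\<lambda>k r. (k # r # xs) ! 4) (xs ! 0))"
    by (rule total_recursive_rec_nat total_recursive_proj | simp)+
  have B: "rec_nat a (\<lambda>k r. b) c = (if c = 0 then a else b)" for a b c :: nat
    by (cases c) auto
  show "total_recursive 3 (\<lambda>xs. if xs ! 0 = 0 then xs ! 1 else xs ! 2)"
    by (rule total_recursive_cong[OF A]) (simp add: B)
qed

lemma total_recursive_if_eq:
  assumes "total_recursive n a" "total_recursive n b" "total_recursive n f" "total_recursive n g"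
  shows "total_recursive n (\<lambda>xs. if a xs = b xs then f xs else g xs)"
proof -
  have "total_recursive n (\<lambda>xs. if (a xs - b xs) + (b xs - a xs) = 0 then f xs else g xs)"
    using assms by (intro total_recursive_if_zero total_recursive_add total_recursive_diff)
  then show ?thesis by (rule total_recursive_cong) auto
qed

lemma total_recursive_if_less:
  assumes "total_recursive n a" "total_recursive n b" "total_recursive n f" "total_recursive n g"
  shows "total_recursive n (\<lambda>xs. if a xs < b xs then f xs else g xs)"
proof -
  have "total_recursive n (\<lambda>xs. if Suc (a xs) - b xs = 0 then f xs else g xs)"
    using assms by (intro total_recursive_if_zero total_recursive_Suc total_recursive_diff)
  then show ?thesis by (rule total_recursive_cong) auto
qed

lemma total_recursive_triangle:
  assumes "total_recursive n f" shows "total_recursive n (\<lambda>xs. triangle (f xs))"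
proof (rule total_recursive_compose1[OF _ assms])
  have A: "total_recursive 1
      (\<lambda>xs. rec_nat 0 (\<lambda>k r. (k # r # xs) ! 1 + Suc ((k # r # xs) ! 0)) (xs ! 0))"
    by (rule total_recursive_rec_nat total_recursive_proj total_recursive_const
        total_recursive_add total_recursive_Suc | simp)+
  have B: "rec_nat 0 (\<lambda>k r. Suc (r + k)) x = triangle x" for x by (induct x) auto
  show "total_recursive 1 (\<lambda>xs. triangle (xs ! 0))" by (rule total_recursive_cong[OF A]) (simp add: B)
qed

lemma total_recursive_prod_encode:
  assumes "total_recursive n f" "total_recursive n g"
  shows "total_recursive n (\<lambda>xs. prod_encode (f xs, g xs))"
proof -
  have "total_recursive n (\<lambda>xs. triangle (f xs + g xs) + f xs)"
    using assms by (intro total_recursive_add total_recursive_triangle)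
  then show ?thesis by (rule total_recursive_cong) (simp add: prod_encode_def)
qed

definition triangle_root :: "nat \<Rightarrow> nat" where
  "triangle_root c = (LEAST s. Suc c - triangle (Suc s) = 0)"

lemma triangle_root_bounds: "triangle (triangle_root c) \<le> c \<and> c < triangle (Suc (triangle_root c))"
proof -
  have ex: "Suc c - triangle (Suc c) = 0"
    using le_add2[of "Suc c" "triangle c"] by simp
  have upper: "Suc c - triangle (Suc (triangle_root c)) = 0"
    unfolding triangle_root_def by (rule LeastI[where P="\<lambda>s. Suc c - triangle (Suc s) = 0", OF ex])
  have lower: "triangle (triangle_root c) \<le> c"
  proof (cases "triangle_root c")
    case (Suc s)
    have "Suc c - triangle (Suc s) \<noteq> 0"
      using not_less_Least[of s "\<lambda>s. Suc c - triangle (Suc s) = 0"] Suc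
      unfolding triangle_root_def by simp
    then show ?thesis using Suc by simp
  qed simp
  from upper lower show ?thesis by simp
qed

lemma prod_decode_triangle_root:
  "prod_decode c = (c - triangle (triangle_root c), triangle_root c - (c - triangle (triangle_root c)))"
proof -
  let ?s = "triangle_root c" let ?a = "c - triangle ?s"
  have "?a \<le> ?s" using triangle_root_bounds[of c] triangle_Suc[of ?s] by linarith
  then have "prod_encode (?a, ?s - ?a) = c"
    using triangle_root_bounds[of c] by (simp add: prod_encode_def)
  then show ?thesis by (metis prod_encode_inverse)
qed

lemma total_recursive_triangle_root:
  assumes "total_recursive n f" shows "total_recursive n (\<lambda>xs. triangle_root (f xs))"
proof (rule total_recursive_compose1[OF _ assms])
  have "total_recursive 2 (\<lambda>xs. Suc (xs ! 1) - triangle (Suc (xs ! 0)))"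
    by (intro total_recursive_diff total_recursive_Suc total_recursive_triangle total_recursive_proj) auto
  moreover have "\<exists>y. Suc ((y # xs) ! 1) - triangle (Suc ((y # xs) ! 0)) = 0" for xs :: "nat list"
    using le_add2[of "Suc (xs ! 0)" "triangle (xs ! 0)"] by (intro exI[of _ "xs ! 0"]) simp
  ultimately have "total_recursive 1 (\<lambda>xs. LEAST y. Suc ((y # xs) ! 1) - triangle (Suc ((y # xs) ! 0)) = 0)"
    by (intro total_recursive_Least) (simp_all add: numeral_2_eq_2)
  then show "total_recursive 1 (\<lambda>xs. triangle_root (xs ! 0))"
    by (rule total_recursive_cong) (simp add: triangle_root_def)
qed

lemma total_recursive_fst_prod_decode:
  assumes "total_recursive n f" shows "total_recursive n (\<lambda>xs. fst (prod_decode (f xs)))"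
proof -
  have "total_recursive n (\<lambda>xs. f xs - triangle (triangle_root (f xs)))"
    using assms by (intro total_recursive_diff total_recursive_triangle total_recursive_triangle_root)
  then show ?thesis by (rule total_recursive_cong) (simp add: prod_decode_triangle_root)
qed

lemma total_recursive_snd_prod_decode:
  assumes "total_recursive n f" shows "total_recursive n (\<lambda>xs. snd (prod_decode (f xs)))"
proof -
  have "total_recursive n (\<lambda>xs. triangle_root (f xs) - (f xs - triangle (triangle_root (f xs))))"
    using assms by (intro total_recursive_diff total_recursive_triangle total_recursive_triangle_root)
  then show ?thesis by (rule total_recursive_cong) (simp add: prod_decode_triangle_root)
qed

section \<open>Codes of finite sequences\<close>

definition code_hd :: "nat \<Rightarrow> nat" where
  "code_hd c = fst (prod_decode (c - 1))"

definition code_tl :: "nat \<Rightarrow> nat" where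
  "code_tl c = snd (prod_decode (c - 1))"

definition code_nth :: "nat \<Rightarrow> nat \<Rightarrow> nat" where
  "code_nth c k = code_hd ((code_tl ^^ k) c)"

lemma list_decode_code_tl: "list_decode (code_tl c) = tl (list_decode c)"
proof (cases c)
  case 0
  have "prod_decode 0 = (0, 0)" by (simp add: prod_decode_def prod_decode_aux.simps)
  then show ?thesis using 0 by (simp add: code_tl_def)
qed (auto simp: code_tl_def split: prod.split)

lemma code_hd_eq_hd: "c \<noteq> 0 \<Longrightarrow> code_hd c = hd (list_decode c)"
  by (cases c) (auto simp: code_hd_def split: prod.split)

lemma list_decode_eq_Nil_iff: "list_decode c = [] \<longleftrightarrow> c = 0"
  by (metis list_decode.simps(1) list_decode_inverse list_encode.simps(1))

lemma list_decode_code_tl_iterate: "list_decode ((code_tl ^^ k) c) = drop k (list_decode c)"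
  by (induct k) (auto simp: list_decode_code_tl drop_Suc tl_drop)

lemma code_tl_iterate_eq_0_iff: "(code_tl ^^ k) c = 0 \<longleftrightarrow> length (list_decode c) \<le> k"
  by (metis list_decode_code_tl_iterate list_decode_eq_Nil_iff drop_eq_Nil)

lemma code_nth_eq_nth:
  assumes "k < length (list_decode c)" shows "code_nth c k = list_decode c ! k"
proof -
  have "(code_tl ^^ k) c \<noteq> 0" using assms code_tl_iterate_eq_0_iff by simp
  then have "code_nth c k = hd (drop k (list_decode c))"
    unfolding code_nth_def by (simp add: code_hd_eq_hd list_decode_code_tl_iterate)
  then show ?thesis using assms by (simp add: hd_drop_conv_nth)
qed

lemma code_nth_prefix_code: "k < n \<Longrightarrow> code_nth (prefix_code p n) k = p k"
  by (simp add: code_nth_eq_nth prefix_code_def)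

lemma total_recursive_code_tl_iterate:
  assumes "total_recursive n f" "total_recursive n g"
  shows "total_recursive n (\<lambda>xs. (code_tl ^^ (g xs)) (f xs))"
proof -
  have A: "total_recursive n (\<lambda>xs. rec_nat (f xs) (\<lambda>k r. code_tl ((k # r # xs) ! 1)) (g xs))"
    unfolding code_tl_def
    by (intro total_recursive_rec_nat assms total_recursive_snd_prod_decode total_recursive_pred
        total_recursive_proj) auto
  have B: "rec_nat c (\<lambda>k r. code_tl r) k = (code_tl ^^ k) c" for c k by (induct k) auto
  show ?thesis by (rule total_recursive_cong[OF A]) (simp add: B)
qed

lemma total_recursive_code_nth:
  assumes "total_recursive n f" "total_recursive n g"
  shows "total_recursive n (\<lambda>xs. code_nth (f xs) (g xs))"
  unfolding code_nth_def code_hd_def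
  by (intro total_recursive_fst_prod_decode total_recursive_pred total_recursive_code_tl_iterate assms)

lemma total_recursive_length_list_decode:
  assumes "total_recursive n f" shows "total_recursive n (\<lambda>xs. length (list_decode (f xs)))"
proof (rule total_recursive_compose1[OF _ assms])
  have "total_recursive 2 (\<lambda>xs. (code_tl ^^ (xs ! 0)) (xs ! 1))"
    by (intro total_recursive_code_tl_iterate total_recursive_proj) auto
  moreover have "\<exists>y. (code_tl ^^ ((y # xs) ! 0)) ((y # xs) ! 1) = 0" for xs :: "nat list"
    by (auto simp: code_tl_iterate_eq_0_iff)
  ultimately have A: "total_recursive 1 (\<lambda>xs. LEAST y. (code_tl ^^ ((y # xs) ! 0)) ((y # xs) ! 1) = 0)"
    by (intro total_recursive_Least) (simp_all add: numeral_2_eq_2)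
  have B: "(LEAST y. (code_tl ^^ y) c = 0) = length (list_decode c)" for c
    by (rule Least_equality) (auto simp: code_tl_iterate_eq_0_iff)
  show "total_recursive 1 (\<lambda>xs. length (list_decode (xs ! 0)))"
    by (rule total_recursive_cong[OF A]) (simp add: B)
qed

lemma total_recursive_map_upt_length:
  assumes g: "total_recursive 2 (\<lambda>xs. g (xs ! 0) (xs ! 1))"
  shows "total_recursive 1
    (\<lambda>xs. list_encode (map (g (xs ! 0)) [0..<length (list_decode (xs ! 0))]))"
proof -
  let ?len = "\<lambda>c. length (list_decode c)"
  have A: "total_recursive 1 (\<lambda>xs. rec_nat 0
      (\<lambda>k r. (\<lambda>zs. Suc (prod_encode (g (zs ! 2) (?len (zs ! 2) - Suc (zs ! 0)), zs ! 1))) (k # r # xs))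
      (?len (xs ! 0)))"
    by (intro total_recursive_rec_nat total_recursive_proj total_recursive_const total_recursive_Suc
        total_recursive_prod_encode total_recursive_compose2[OF g] total_recursive_diff
        total_recursive_length_list_decode) auto
  \<comment> \<open>the list is built from its last element backwards\<close>
  have B: "rec_nat 0 (\<lambda>k r. Suc (prod_encode (g c (l - Suc k), r))) j
      = list_encode (map (g c) [l - j..<l])" if "j \<le> l" for c l j
    using that
  proof (induct j)
    case (Suc j)
    then have "[l - Suc j..<l] = (l - Suc j) # [l - j..<l]"
      by (simp add: upt_conv_Cons Suc_diff_Suc)
    then show ?case using Suc by simp
  qed simp
  show ?thesis by (rule total_recursive_cong[OF A]) (simp add: B)
qed

lemma computable_on_mono: "computable_on A F \<Longrightarrow> B \<subseteq> A \<Longrightarrow> computable_on B F"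
  unfolding computable_on_def by blast

lemma computable_on_comp_causal:
  assumes F: "computable_on UNIV F"
    and g: "total_recursive 2 (\<lambda>xs. g (xs ! 0) (xs ! 1))"
    and g_prefix: "\<And>q n m. m < n \<Longrightarrow> g (prefix_code q n) m = G q m"
  shows "computable_on UNIV (\<lambda>q. F (G q))"
proof -
  obtain gF where gF: "rec_fn 2 gF"
    "\<forall>p i. (\<forall>n. gF [prefix_code p n, i] \<in> {0, Suc (F p i)}) \<and>
           (\<exists>n. gF [prefix_code p n, i] = Suc (F p i))"
    using F unfolding computable_on_def by blast
  let ?code = "\<lambda>c. list_encode (map (g c) [0..<length (list_decode c)])"
  have code_prefix: "?code (prefix_code q n) = prefix_code (G q) n" for q n
  proof -
    have "length (list_decode (prefix_code q n)) = n" by (simp add: prefix_code_def)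
    moreover have "map (g (prefix_code q n)) [0..<n] = map (G q) [0..<n]"
      by (rule map_cong) (simp_all add: g_prefix)
    ultimately show ?thesis by (simp only: prefix_code_def[of "G q"])
  qed
  have gF2: "total_recursive 2 (\<lambda>xs. gF [xs ! 0, xs ! 1])"
    by (rule total_recursive_cong[OF rec_fn_imp_total_recursive[OF gF(1)]])
      (simp add: numeral_2_eq_2 length_Suc_conv, metis nth_Cons_0 nth_Cons_Suc)
  have code: "total_recursive 2 (\<lambda>xs. ?code (xs ! 0))"
    by (rule total_recursive_compose1[OF total_recursive_map_upt_length[OF g] total_recursive_proj]) simp
  have "total_recursive 2 (\<lambda>xs. gF [?code (xs ! 0), xs ! 1])"
    by (rule total_recursive_compose2[where F="\<lambda>a b. gF [a, b]", OF gF2 code total_recursive_proj]) simp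
  then obtain h where h: "rec_fn 2 h" "\<And>a b. h [a, b] = gF [?code a, b]"
    by (elim total_recursive_2E) simp
  show ?thesis unfolding computable_on_def
    by (intro exI[of _ h] conjI h(1)) (use gF in \<open>simp add: h(2) code_prefix\<close>)
qed

section \<open>Encoding Baire space into Cantor space\<close>

primrec nonzero_run :: "baire \<Rightarrow> nat \<Rightarrow> nat" where
  "nonzero_run q 0 = 0"
| "nonzero_run q (Suc m) = (if q m = 0 then 0 else Suc (nonzero_run q m))"

definition cantor_decode :: "baire \<Rightarrow> baire" where
  "cantor_decode q m = (if q m = 0 then Suc (nonzero_run q m) else 0)"

lemma nonzero_run_cong: "(\<And>k. k < m \<Longrightarrow> q k = q' k) \<Longrightarrow> nonzero_run q m = nonzero_run q' m"
  by (induct m) auto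

lemma cantor_decode_cong: "(\<And>k. k \<le> m \<Longrightarrow> q k = q' k) \<Longrightarrow> cantor_decode q m = cantor_decode q' m"
  unfolding cantor_decode_def using nonzero_run_cong[of m q q'] by simp

lemma total_recursive_cantor_decode_code_nth:
  "total_recursive 2 (\<lambda>xs. cantor_decode (code_nth (xs ! 0)) (xs ! 1))"
proof -
  have A: "total_recursive 2 (\<lambda>xs. rec_nat 0
      (\<lambda>k r. (\<lambda>zs. if code_nth (zs ! 2) (zs ! 0) = 0 then 0 else Suc (zs ! 1)) (k # r # xs)) (xs ! 1))"
    by (intro total_recursive_rec_nat total_recursive_proj total_recursive_const
        total_recursive_if_zero total_recursive_code_nth total_recursive_Suc) auto
  have B: "rec_nat 0 (\<lambda>k r. if q k = 0 then 0 else Suc r) m = nonzero_run q m" for q m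
    by (induct m) auto
  have "total_recursive 2 (\<lambda>xs. nonzero_run (code_nth (xs ! 0)) (xs ! 1))"
    by (rule total_recursive_cong[OF A]) (simp only: One_nat_def numeral_2_eq_2 nth_Cons_Suc nth_Cons_0 B)
  then show ?thesis unfolding cantor_decode_def
    by (intro total_recursive_if_zero total_recursive_code_nth total_recursive_proj
        total_recursive_Suc total_recursive_const) auto
qed

lemma computable_on_comp_cantor_decode:
  assumes "computable_on UNIV F" shows "computable_on UNIV (\<lambda>q. F (cantor_decode q))"
proof (rule computable_on_comp_causal[OF assms total_recursive_cantor_decode_code_nth])
  show "cantor_decode (code_nth (prefix_code q n)) m = cantor_decode q m" if "m < n" for q n m
    using that by (intro cantor_decode_cong) (simp add: code_nth_prefix_code)
qed

primrec block_start :: "baire \<Rightarrow> nat \<Rightarrow> nat" where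
  "block_start p 0 = 0"
| "block_start p (Suc k) = block_start p k + Suc (p k)"

definition cantor_encode :: "baire \<Rightarrow> baire" where
  "cantor_encode p i = (if \<exists>k. block_start p (Suc k) = Suc i then 0 else 1)"

lemma cantor_encode_in_cantor_space: "cantor_encode p \<in> cantor_space"
  by (simp add: cantor_space_def cantor_encode_def)

lemma strict_mono_block_start: "strict_mono (block_start p)"
  by (simp add: strict_mono_Suc_iff)

lemma block_start_cong: "(\<And>j. j < k \<Longrightarrow> p j = p' j) \<Longrightarrow> block_start p k = block_start p' k"
  by (induct k) auto

lemma total_recursive_block_start_code_nth:
  "total_recursive 2 (\<lambda>xs. block_start (code_nth (xs ! 0)) (xs ! 1))"
proof -
  have A: "total_recursive 2 (\<lambda>xs. rec_nat 0
      (\<lambda>k r. (\<lambda>zs. zs ! 1 + Suc (code_nth (zs ! 2) (zs ! 0))) (k # r # xs)) (xs ! 1))"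
    by (intro total_recursive_rec_nat total_recursive_proj total_recursive_const total_recursive_add
        total_recursive_code_nth total_recursive_Suc) auto
  have B: "rec_nat 0 (\<lambda>k r. r + Suc (q k)) m = block_start q m" for q m
    by (induct m) auto
  show ?thesis
    by (rule total_recursive_cong[OF A]) (simp only: One_nat_def numeral_2_eq_2 nth_Cons_Suc nth_Cons_0 B)
qed

lemma rec_nat_bounded_ex: "rec_nat (0::nat) (\<lambda>k r. if P k then 1 else r) n \<noteq> 0 \<longleftrightarrow> (\<exists>k<n. P k)"
  by (induct n) (auto simp: less_Suc_eq)

text \<open>From the first \<open>n\<close> entries of \<open>p\<close> one knows the first \<open>block_start p n\<close> entries of
  \<open>cantor_encode p\<close>; the answer \<open>0\<close> means ``not yet known'', otherwise the entry is shifted by one.\<close>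
definition cantor_encode_approx :: "nat \<Rightarrow> nat \<Rightarrow> nat" where
  "cantor_encode_approx c i =
    (if i < block_start (code_nth c) (length (list_decode c))
     then if \<exists>k < length (list_decode c). block_start (code_nth c) (Suc k) = Suc i then 1 else 2
     else 0)"

lemma cantor_encode_approx_prefix_code:
  "cantor_encode_approx (prefix_code p n) i =
    (if i < block_start p n then Suc (cantor_encode p i) else 0)"
proof -
  have len: "length (list_decode (prefix_code p n)) = n" by (simp add: prefix_code_def)
  have bs: "block_start (code_nth (prefix_code p n)) k = block_start p k" if "k \<le> n" for k
    using that by (intro block_start_cong) (simp add: code_nth_prefix_code)
  have "(\<exists>k<n. block_start (code_nth (prefix_code p n)) (Suc k) = Suc i)
      \<longleftrightarrow> (\<exists>k<n. block_start p (Suc k) = Suc i)"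
    using bs[OF Suc_leI] by auto
  also have "\<dots> \<longleftrightarrow> (\<exists>k. block_start p (Suc k) = Suc i)" if "i < block_start p n"
  proof -
    have "Suc k \<le> n" if "block_start p (Suc k) = Suc i" for k
      using that \<open>i < block_start p n\<close> strict_mono_less_eq[OF strict_mono_block_start[of p], of "Suc k" n]
      by simp
    then show ?thesis by (auto simp: Suc_le_eq)
  qed
  finally show ?thesis
    unfolding cantor_encode_approx_def cantor_encode_def len bs[OF order_refl] by auto
qed

lemma total_recursive_cantor_encode_approx:
  "total_recursive 2 (\<lambda>xs. cantor_encode_approx (xs ! 0) (xs ! 1))"
proof -
  let ?len = "\<lambda>c. length (list_decode c)"
  have A: "total_recursive 2 (\<lambda>xs. rec_nat 0
      (\<lambda>k r. (\<lambda>zs. if block_start (code_nth (zs ! 2)) (Suc (zs ! 0)) = Suc (zs ! 3) then 1 else zs ! 1)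
        (k # r # xs)) (?len (xs ! 0)))"
    by (intro total_recursive_rec_nat total_recursive_proj total_recursive_const total_recursive_if_eq
        total_recursive_compose2[OF total_recursive_block_start_code_nth] total_recursive_Suc
        total_recursive_length_list_decode) auto
  have B: "total_recursive 2 (\<lambda>xs. rec_nat 0
      (\<lambda>k r. if block_start (code_nth (xs ! 0)) (Suc k) = Suc (xs ! 1) then 1 else r) (?len (xs ! 0)))"
    by (rule total_recursive_cong[OF A]) (simp only: One_nat_def numeral_2_eq_2 numeral_3_eq_3 nth_Cons_Suc nth_Cons_0)
  have "total_recursive 2 (\<lambda>xs.
      if xs ! 1 < block_start (code_nth (xs ! 0)) (?len (xs ! 0))
      then if rec_nat (0::nat) (\<lambda>k r. if block_start (code_nth (xs ! 0)) (Suc k) = Suc (xs ! 1) then 1 else r)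
                (?len (xs ! 0)) = 0 then 2 else 1
      else 0)"
    by (intro total_recursive_if_less total_recursive_proj total_recursive_const
        total_recursive_compose2[OF total_recursive_block_start_code_nth]
        total_recursive_length_list_decode total_recursive_if_zero[OF B]) simp_all
  then show ?thesis
    by (rule total_recursive_cong)
      (simp only: cantor_encode_approx_def rec_nat_bounded_ex[symmetric], simp)
qed

lemma computable_on_cantor_encode: "computable_on UNIV cantor_encode"
proof -
  obtain g where g: "rec_fn 2 g" "\<And>a b. g [a, b] = cantor_encode_approx a b"
    using total_recursive_cantor_encode_approx by (elim total_recursive_2E) simp
  show ?thesis unfolding computable_on_def
  proof (intro exI[of _ g] conjI g(1) ballI allI)
    fix p i n
    show "g [prefix_code p n, i] \<in> {0, Suc (cantor_encode p i)}"
      by (simp add: g(2) cantor_encode_approx_prefix_code)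
  next
    fix p i
    have "Suc i \<le> block_start p (Suc i)"
      by (rule strict_mono_imp_increasing[OF strict_mono_block_start])
    then have "g [prefix_code p (Suc i), i] = Suc (cantor_encode p i)"
      by (simp add: g(2) cantor_encode_approx_prefix_code)
    then show "\<exists>n. g [prefix_code p n, i] = Suc (cantor_encode p i)" ..
  qed
qed

lemma enumerate_range_strict_mono:
  fixes e :: "nat \<Rightarrow> nat"
  assumes e: "strict_mono e"
  shows "enumerate (range e) n = e n"
proof -
  have inf: "infinite (range e)"
    using e strict_mono_imp_inj_on range_inj_infinite by blast
  show ?thesis
  proof (induct n)
    case 0
    show ?case unfolding enumerate_0
      by (rule Least_equality) (auto simp: strict_mono_less_eq[OF e])
  next
    case (Suc n)
    show ?case unfolding enumerate_Suc''[OF inf] Suc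
    proof (rule Least_equality)
      show "e (Suc n) \<in> range e \<and> e n < e (Suc n)" using e by (auto simp: strict_mono_def)
      fix y assume "y \<in> range e \<and> e n < y"
      then obtain m where "y = e m" "e n < e m" by auto
      then show "e (Suc n) \<le> y" using e by (simp add: strict_mono_less strict_mono_less_eq Suc_le_eq)
    qed
  qed
qed

lemma cantor_encode_eq_0_iff: "cantor_encode p i = 0 \<longleftrightarrow> i \<in> range (\<lambda>k. block_start p k + p k)"
  by (auto simp: cantor_encode_def)

lemma nonzero_run_cantor_encode:
  "j \<le> p k \<Longrightarrow> nonzero_run (cantor_encode p) (block_start p k + j) = j"
proof (induct j)
  case 0
  show ?case by (cases k) (auto simp: cantor_encode_eq_0_iff)
next
  case (Suc j)
  have "block_start p k + j \<notin> range (\<lambda>k. block_start p k + p k)"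
  proof
    assume "block_start p k + j \<in> range (\<lambda>k. block_start p k + p k)"
    then obtain k' where k': "block_start p (Suc k') = Suc (block_start p k + j)" by auto
    then have "block_start p k < block_start p (Suc k')" "block_start p (Suc k') < block_start p (Suc k)"
      using Suc.prems by auto
    then have "k < Suc k'" "Suc k' < Suc k"
      by (simp_all only: strict_mono_less[OF strict_mono_block_start])
    then show False by simp
  qed
  then show ?case using Suc by (simp add: cantor_encode_eq_0_iff)
qed

lemma minus_one_cantor_decode_cantor_encode: "minus_one (cantor_decode (cantor_encode p)) = Some p"
proof -
  define e where "e k = block_start p k + p k" for k
  have e: "strict_mono e" unfolding strict_mono_Suc_iff e_def by simp
  have nonzero: "{n. cantor_decode (cantor_encode p) n \<noteq> 0} = range e"
    by (auto simp: cantor_decode_def cantor_encode_eq_0_iff e_def)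
  have "cantor_decode (cantor_encode p) (e k) - 1 = p k" for k
    using nonzero_run_cantor_encode[of "p k" p k] by (auto simp: cantor_decode_def e_def cantor_encode_eq_0_iff)
  then show ?thesis
    unfolding minus_one_def nonzero
    using enumerate_range_strict_mono[OF e] strict_mono_imp_inj_on[OF e] range_inj_infinite by auto
qed

section \<open>Computable maps are continuous\<close>

lemma computable_on_imp_locally_constant:
  assumes "computable_on UNIV F"
  obtains n where "\<And>p'. (\<And>k. k < n \<Longrightarrow> p' k = p k) \<Longrightarrow> F p' i = F p i"
proof -
  obtain g where g: "\<forall>p i. (\<forall>n. g [prefix_code p n, i] \<in> {0, Suc (F p i)}) \<and>
                         (\<exists>n. g [prefix_code p n, i] = Suc (F p i))"
    using assms unfolding computable_on_def by blast
  then obtain n where n: "g [prefix_code p n, i] = Suc (F p i)" by blast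
  have "F p' i = F p i" if "\<And>k. k < n \<Longrightarrow> p' k = p k" for p'
  proof -
    have "prefix_code p' n = prefix_code p n"
      unfolding prefix_code_def using that by (intro arg_cong[where f=list_encode] map_cong) auto
    then have "Suc (F p i) \<in> {0, Suc (F p' i)}" using n g by metis
    then show ?thesis by simp
  qed
  then show thesis by (rule that)
qed

lemma computable_on_imp_continuous:
  assumes "computable_on UNIV F" shows "continuous_on UNIV F"
proof (rule continuous_on_coordinatewise_then_product)
  fix i
  show "continuous_on UNIV (\<lambda>p. F p i)"
    unfolding continuous_on_topological
  proof (intro ballI allI impI)
    fix p :: baire and B :: "nat set" assume "F p i \<in> B"
    obtain n where n: "\<And>p'. (\<And>k. k < n \<Longrightarrow> p' k = p k) \<Longrightarrow> F p' i = F p i"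
      using computable_on_imp_locally_constant[OF assms] by blast
    let ?A = "{f :: baire. \<forall>k\<in>{..<n}. f (id k) \<in> {p k}}"
    have "open ?A"
      using product_topology_basis'[where x="id::nat\<Rightarrow>nat" and U="\<lambda>k. {p k}" and I="{..<n}"]
      by (simp only: finite_lessThan open_discrete simp_thms)
    moreover have "F y i \<in> B" if "y \<in> ?A" for y
      using that n[of y] \<open>F p i \<in> B\<close> by simp
    ultimately show "\<exists>A. open A \<and> p \<in> A \<and> (\<forall>y\<in>UNIV. y \<in> A \<longrightarrow> F y i \<in> B)"
      by (intro exI[of _ ?A]) simp
  qed
qed

lemma compact_cantor_space: "compact cantor_space"
proof -
  have eq: "cantor_space = PiE UNIV (\<lambda>_. {0..1::nat})"
    by (auto simp: cantor_space_def PiE_iff)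
  have "compactin (product_topology (\<lambda>_. euclidean) UNIV) (PiE UNIV (\<lambda>_. {0..1::nat}))"
    by (subst compactin_PiE) (auto intro: finite_imp_compact)
  then show ?thesis unfolding eq euclidean_product_topology by simp
qed

section \<open>The final topology\<close>

lemma openin_final_topology:
  assumes "\<delta> ` D \<subseteq> X"
  shows "openin (final_topology D \<delta> X) U \<longleftrightarrow> U \<subseteq> X \<and> openin (top_of_set D) {p \<in> D. \<delta> p \<in> U}"
  unfolding final_topology_def using istopology_final_open[OF assms] by (simp add: final_open_def)

lemma topspace_final_topology:
  assumes "\<delta> ` D \<subseteq> X" shows "topspace (final_topology D \<delta> X) = X"
proof -
  have "{p \<in> D. \<delta> p \<in> X} = D" using assms by blast
  then have "openin (final_topology D \<delta> X) X" by (simp add: openin_final_topology[OF assms])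
  then show ?thesis using openin_final_topology[OF assms] openin_subset by blast
qed

lemma continuous_map_final_topology:
  assumes "\<delta> ` D \<subseteq> X" and "continuous_on S \<Phi>" and "\<Phi> ` S \<subseteq> D"
  shows "continuous_map (top_of_set S) (final_topology D \<delta> X) (\<lambda>q. \<delta> (\<Phi> q))"
  unfolding continuous_map_def
proof (intro conjI allI impI)
  show "(\<lambda>q. \<delta> (\<Phi> q)) \<in> topspace (top_of_set S) \<rightarrow> topspace (final_topology D \<delta> X)"
    using assms(1,3) by (auto simp: topspace_final_topology)
  fix U assume "openin (final_topology D \<delta> X) U"
  then have "openin (top_of_set D) {p \<in> D. \<delta> p \<in> U}"
    by (simp add: openin_final_topology[OF assms(1)])
  then have "openin (top_of_set S) (S \<inter> \<Phi> -` {p \<in> D. \<delta> p \<in> U})"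
    using assms(2,3) by (intro continuous_openin_preimage) auto
  moreover have "S \<inter> \<Phi> -` {p \<in> D. \<delta> p \<in> U} = {q \<in> topspace (top_of_set S). \<delta> (\<Phi> q) \<in> U}"
    using assms(3) by auto
  ultimately show "openin (top_of_set S) {q \<in> topspace (top_of_set S). \<delta> (\<Phi> q) \<in> U}" by simp
qed

lemma compact_space_final_topology:
  assumes "\<delta> ` D \<subseteq> X" and "compact S" and "continuous_on S \<Phi>" and "\<Phi> ` S \<subseteq> D"
    and "(\<lambda>q. \<delta> (\<Phi> q)) ` S = X"
  shows "compact_space (final_topology D \<delta> X)"
proof -
  have "compactin (top_of_set S) S" using assms(2) by (simp add: compactin_subtopology)
  from image_compactin[OF this continuous_map_final_topology[OF assms(1,3,4)]]
  show ?thesis unfolding compact_space_def topspace_final_topology[OF assms(1)] assms(5) .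
qed

lemma multi_retraceable_realizer:
  assumes "multi_retraceable D \<delta> X" and "\<delta> ` D \<subseteq> X"
  obtains F where "computable_on UNIV F" and "\<And>q. F q \<in> D"
    and "\<And>q p. p \<in> D \<Longrightarrow> minus_one q = Some p \<Longrightarrow> \<delta> (F q) = \<delta> p"
proof -
  from assms(1) obtain r :: "'a option \<Rightarrow> 'a set" and F where r: "\<forall>x\<in>X. r (Some x) = {x}"
    and F: "computable_on UNIV F" "\<forall>q. F q \<in> D \<and> \<delta> (F q) \<in> r (completion_rep D \<delta> q)"
    unfolding multi_retraceable_def by (elim exE conjE) (rule that, assumption+)
  have "\<delta> (F q) = \<delta> p" if "p \<in> D" "minus_one q = Some p" for q p
  proof -
    have "completion_rep D \<delta> q = Some (\<delta> p)" using that by (simp add: completion_rep_def)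
    moreover have "\<delta> p \<in> X" using that(1) assms(2) by blast
    ultimately show ?thesis using F(2) r by (metis singletonD)
  qed
  with F show thesis by (intro that) auto
qed

lemma cantor_decode_realizer_representation:
  assumes X: "\<delta> ` D = X" and F: "computable_on UNIV F" and F_D: "\<And>q. F q \<in> D"
    and F_retract: "\<And>q p. p \<in> D \<Longrightarrow> minus_one q = Some p \<Longrightarrow> \<delta> (F q) = \<delta> p"
  defines "\<Phi> \<equiv> \<lambda>q. F (cantor_decode q)"
  shows "representation cantor_space (\<lambda>q. \<delta> (\<Phi> q)) X"
    and "rep_equiv cantor_space (\<lambda>q. \<delta> (\<Phi> q)) D \<delta>"
proof -
  have \<Phi>: "computable_on UNIV \<Phi>"
    unfolding \<Phi>_def by (rule computable_on_comp_cantor_decode[OF F])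
  have \<Phi>_D: "\<Phi> q \<in> D" for q unfolding \<Phi>_def by (rule F_D)
  have retract: "\<delta> (\<Phi> (cantor_encode p)) = \<delta> p" if "p \<in> D" for p
    unfolding \<Phi>_def using that by (simp add: F_retract minus_one_cantor_decode_cantor_encode)
  have "X \<subseteq> (\<lambda>q. \<delta> (\<Phi> q)) ` cantor_space"
  proof
    fix x assume "x \<in> X"
    then obtain p where "p \<in> D" "x = \<delta> p" using X by blast
    then show "x \<in> (\<lambda>q. \<delta> (\<Phi> q)) ` cantor_space"
      by (intro rev_image_eqI[OF cantor_encode_in_cantor_space[of p]]) (simp add: retract)
  qed
  with X \<Phi>_D show "representation cantor_space (\<lambda>q. \<delta> (\<Phi> q)) X"
    unfolding representation_def by blast
  have "rep_le cantor_space (\<lambda>q. \<delta> (\<Phi> q)) D \<delta>"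
    unfolding rep_le_def
    by (intro exI[of _ \<Phi>] conjI ballI computable_on_mono[OF \<Phi> subset_UNIV]) (simp_all add: \<Phi>_D)
  moreover have "rep_le D \<delta> cantor_space (\<lambda>q. \<delta> (\<Phi> q))"
    unfolding rep_le_def
    by (intro exI[of _ cantor_encode] conjI ballI computable_on_mono[OF computable_on_cantor_encode])
      (simp_all add: cantor_encode_in_cantor_space retract)
  ultimately show "rep_equiv cantor_space (\<lambda>q. \<delta> (\<Phi> q)) D \<delta>"
    unfolding rep_equiv_def ..
qed

theorem proposition2p8:
  fixes D :: "baire set" and \<delta>X :: "baire \<Rightarrow> 'a" and X :: "'a set"
  assumes "representation D \<delta>X X"
    and "multi_retraceable D \<delta>X X"
  shows "(\<exists>\<delta> :: baire \<Rightarrow> 'a. representation cantor_space \<delta> X \<and> rep_equiv cantor_space \<delta> D \<delta>X)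
         \<and> compact_space (final_topology D \<delta>X X)"
proof -
  have X: "\<delta>X ` D = X" using assms(1) unfolding representation_def .
  obtain F where F: "computable_on UNIV F" and F_D: "\<And>q. F q \<in> D"
    and F_retract: "\<And>q p. p \<in> D \<Longrightarrow> minus_one q = Some p \<Longrightarrow> \<delta>X (F q) = \<delta>X p"
    using multi_retraceable_realizer[OF assms(2)] X by blast
  note rep = cantor_decode_realizer_representation[where \<delta>=\<delta>X and F=F, OF X F F_D F_retract]
  have "continuous_on cantor_space (\<lambda>q. F (cantor_decode q))"
    using computable_on_imp_continuous[OF computable_on_comp_cantor_decode[OF F]]
    by (rule continuous_on_subset) simp
  then have "compact_space (final_topology D \<delta>X X)"
    using X F_D rep(1) unfolding representation_def
    by (intro compact_space_final_topology[where \<Phi>="\<lambda>q. F (cantor_decode q)", OF _ compact_cantor_space])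
      auto
  with rep show ?thesis by blast
qed

end
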